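(* Let $h,w\ge 4$ and $G=C_w(U)\sqcap C_h$ with $U=\{i,j\}$, $i\ne j$. (1) If $i$ and $j$ are adjacent in $C_w$, then $Z(G)\le h$. (2) If $i$ and $j$ are not adjacent in $C_w$, then $Z(G)\le 2h$.
   Context: All graphs are finite, simple and undirected. Zero forcing: given a graph $G$ and a set $S\subseteq V(G)$ of initially filled vertices, the color change rule says that if a filled vertex $v$ has exactly one unfilled neighbor $u$, then $v$ forces $u$ to become filled. $S$ is a zero forcing set if repeatedly applying this rule eventually fills every vertex of $G$. The zero forcing number $Z(G)$ is the minimum cardinality of a zero forcing set of $G$. The cycle $C_n$ ($n\ge3$) has vertex set $\{1,\dots,n\}$ and edges $\{k,k+1\}$ for $1\le k\le n-1$ together with $\{n,1\}$. Generalized hierarchical product: for graphs $W,H$ and $U\subseteq V(W)$ (the root set), $W(U)\sqcap H$ is the graph with vertex set $V(W)\times V(H)$ in which $(x_1,y_1)$ and $(x_2,y_2)$ are adjacent iff either ($x_1=x_2\in U$ and $y_1y_2\in E(H)$) or ($y_1=y_2$ and $x_1x_2\in E(W)$). *)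

theory Defs
  imports Main
begin

record 'a graph =
  verts :: "'a set"
  adj :: "'a \<Rightarrow> 'a \<Rightarrow> bool"

definition simple_graph :: "'a graph \<Rightarrow> bool" where
  "simple_graph G \<longleftrightarrow> finite (verts G) \<and>
     (\<forall>x y. adj G x y \<longrightarrow> x \<in> verts G \<and> y \<in> verts G \<and> x \<noteq> y \<and> adj G y x)"

definition cycle_graph :: "nat \<Rightarrow> nat graph" where
  "cycle_graph n = \<lparr> verts = {1..n},
     adj = (\<lambda>x y. x \<in> {1..n} \<and> y \<in> {1..n} \<and>
                 (y = x + 1 \<or> x = y + 1 \<or> (x = n \<and> y = 1) \<or> (x = 1 \<and> y = n))) \<rparr>"

definition hier_prod :: "'a graph \<Rightarrow> 'a set \<Rightarrow> 'b graph \<Rightarrow> ('a \<times> 'b) graph" where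
  "hier_prod W U H = \<lparr> verts = verts W \<times> verts H,
     adj = (\<lambda>(x1, y1) (x2, y2). x1 \<in> verts W \<and> x2 \<in> verts W \<and> y1 \<in> verts H \<and> y2 \<in> verts H \<and>
              ((x1 = x2 \<and> x1 \<in> U \<and> adj H y1 y2) \<or> (y1 = y2 \<and> adj W x1 x2))) \<rparr>"

inductive_set filled :: "'a graph \<Rightarrow> 'a set \<Rightarrow> 'a set" for G S where
  init: "v \<in> S \<Longrightarrow> v \<in> filled G S"
| force: "v \<in> filled G S \<Longrightarrow> adj G v u \<Longrightarrow>
          (\<forall>w. adj G v w \<and> w \<noteq> u \<longrightarrow> w \<in> filled G S) \<Longrightarrow> u \<in> filled G S"

definition zero_forcing_set :: "'a graph \<Rightarrow> 'a set \<Rightarrow> bool" where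
  "zero_forcing_set G S \<longleftrightarrow> S \<subseteq> verts G \<and> verts G \<subseteq> filled G S"

definition zero_forcing_number :: "'a graph \<Rightarrow> nat" where
  "zero_forcing_number G = Min (card ` {S. zero_forcing_set G S})"

end

theory Submission
  imports Defs
begin

text \<open>
  Two consecutive full columns force all of \<open>C\<^sub>w(U) \<sqinter> H\<close>, one column at a time around
  the cycle: a vertex outside the root set has only its two cycle neighbours, and the extra
  column neighbours of a root vertex lie in its own, already filled, column. This gives
  \<open>2h\<close> for every root set.

  For adjacent roots \<open>a\<close> and its predecessor \<open>a'\<close>, take column \<open>a\<close> without rows 2 and 3
  together with rows 1 and 2 of the successor column of \<open>a\<close>: \<open>h\<close> vertices. Row 1 fills around
  the cycle, then \<open>(a,1)\<close> forces \<open>(a,2)\<close>, row 2 fills, and \<open>(a,2)\<close> forces \<open>(a,3)\<close>, so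
  column \<open>a\<close> is full. From then on rows \<open>y-2\<close> and \<open>y-1\<close> give row \<open>y\<close>: \<open>(a',y-1)\<close> forces
  \<open>(a',y)\<close>, after which \<open>(a,y)\<close> forces its successor and the row fills around the cycle.
\<close>

lemma bounded_induct_two_steps:
  fixes k n :: nat
  assumes "k \<le> n" and "P 0" and "P 1"
    and "\<And>k. k + 2 \<le> n \<Longrightarrow> P k \<Longrightarrow> P (k + 1) \<Longrightarrow> P (k + 2)"
  shows "P k"
  using assms(1)
proof (induction k rule: less_induct)
  case (less k)
  show ?case
  proof (cases "k < 2")
    case True
    then show ?thesis using assms(2,3) by (auto simp: less_2_cases_iff)
  next
    case False
    then obtain m where "k = m + 2" by (metis add.commute le_add_diff_inverse not_less)
    then show ?thesis using less assms(4)[of m] by simp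
  qed
qed

definition nbrs :: "'a graph \<Rightarrow> 'a \<Rightarrow> 'a set" where
  "nbrs G v = {u. adj G v u}"

lemma filled_forceI:
  assumes "v \<in> filled G S" and "u \<in> nbrs G v" and "nbrs G v - {u} \<subseteq> filled G S"
  shows "u \<in> filled G S"
  using assms by (auto simp: nbrs_def intro: filled.force)

lemma zero_forcing_number_le_card:
  assumes "finite (verts G)" and "zero_forcing_set G S"
  shows "zero_forcing_number G \<le> card S"
proof -
  have "{S. zero_forcing_set G S} \<subseteq> Pow (verts G)"
    by (auto simp: zero_forcing_set_def)
  then have "finite (card ` {S. zero_forcing_set G S})"
    using assms(1) by (meson finite_Pow_iff finite_imageI finite_subset)
  then show ?thesis
    using assms(2) unfolding zero_forcing_number_def by (auto intro: Min_le)
qed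

lemma verts_hier_prod [simp]: "verts (hier_prod W U H) = verts W \<times> verts H"
  by (simp add: hier_prod_def)

lemma nbrs_hier_prod:
  assumes "x \<in> verts W" and "y \<in> verts H"
  shows "nbrs (hier_prod W U H) (x, y) =
           (if x \<in> U then {x} \<times> (nbrs H y \<inter> verts H) else {}) \<union> (nbrs W x \<inter> verts W) \<times> {y}"
  using assms by (auto simp: nbrs_def hier_prod_def)

lemma verts_cycle_graph [simp]: "verts (cycle_graph n) = {1..n}"
  by (simp add: cycle_graph_def)

lemma nbrs_cycle_graph_subset: "nbrs (cycle_graph n) x \<subseteq> verts (cycle_graph n)"
  by (auto simp: nbrs_def cycle_graph_def)

lemma nbrs_cycle_graph_interior: "1 < y \<Longrightarrow> y < n \<Longrightarrow> nbrs (cycle_graph n) y = {y - 1, y + 1}"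
  by (auto simp: nbrs_def cycle_graph_def)

lemma nbrs_cycle_graph_1: "3 \<le> n \<Longrightarrow> nbrs (cycle_graph n) 1 = {2, n}"
  by (auto simp: nbrs_def cycle_graph_def)

lemma nbrs_hier_prod_cycle_graphs:
  assumes "x \<in> {1..w}" and "y \<in> {1..h}"
  shows "nbrs (hier_prod (cycle_graph w) U (cycle_graph h)) (x, y) =
           (if x \<in> U then {x} \<times> nbrs (cycle_graph h) y else {}) \<union> nbrs (cycle_graph w) x \<times> {y}"
proof -
  have "x \<in> verts (cycle_graph w)" and "y \<in> verts (cycle_graph h)"
    using assms by simp_all
  from nbrs_hier_prod[OF this, of U] show ?thesis
    unfolding Int_absorb2[OF nbrs_cycle_graph_subset] .
qed

text \<open>For \<open>a \<in> {1..n}\<close> and \<open>k < n\<close>, the vertex reached from \<open>a\<close> after \<open>k\<close> steps around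
  \<open>C\<^sub>n\<close>; step \<open>n - 1\<close> is the predecessor of \<open>a\<close>.\<close>

definition cycle_walk :: "nat \<Rightarrow> nat \<Rightarrow> nat \<Rightarrow> nat" where
  "cycle_walk n a k = (if a + k \<le> n then a + k else a + k - n)"

lemma cycle_walk_0: "a \<le> n \<Longrightarrow> cycle_walk n a 0 = a"
  by (simp add: cycle_walk_def)

lemma cycle_walk_in: "a \<in> {1..n} \<Longrightarrow> k < n \<Longrightarrow> cycle_walk n a k \<in> {1..n}"
  by (auto simp: cycle_walk_def)

lemma cycle_walk_eq_iff:
  "a \<in> {1..n} \<Longrightarrow> k < n \<Longrightarrow> l < n \<Longrightarrow> cycle_walk n a k = cycle_walk n a l \<longleftrightarrow> k = l"
  by (auto simp: cycle_walk_def)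

lemma cycle_walk_surj:
  assumes "a \<in> {1..n}" and "x \<in> {1..n}"
  obtains k where "k < n" and "x = cycle_walk n a k"
proof
  show "x = cycle_walk n a (if a \<le> x then x - a else x + n - a)"
    using assms by (auto simp: cycle_walk_def)
qed (use assms in auto)

lemma nbrs_cycle_walk_interior:
  "a \<in> {1..n} \<Longrightarrow> 0 < k \<Longrightarrow> k < n - 1 \<Longrightarrow>
   nbrs (cycle_graph n) (cycle_walk n a k) = {cycle_walk n a (k - 1), cycle_walk n a (k + 1)}"
  by (auto simp: nbrs_def cycle_graph_def cycle_walk_def)

lemma nbrs_cycle_walk_0:
  "a \<in> {1..n} \<Longrightarrow> 3 \<le> n \<Longrightarrow>
   nbrs (cycle_graph n) (cycle_walk n a 0) = {cycle_walk n a 1, cycle_walk n a (n - 1)}"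
  by (auto simp: nbrs_def cycle_graph_def cycle_walk_def)

lemma adj_cycle_graph_obtain_walk:
  assumes "adj (cycle_graph n) i j"
  obtains a where "a \<in> {1..n}" and "{i, j} = {a, cycle_walk n a (n - 1)}"
proof
  let ?a = "if j = i + 1 \<or> (i = n \<and> j = 1) then j else i"
  show "?a \<in> {1..n}" and "{i, j} = {?a, cycle_walk n ?a (n - 1)}"
    using assms by (auto simp: cycle_graph_def cycle_walk_def)
qed

lemma filled_cycle_walk_step:
  fixes U :: "nat set" and H :: "'b graph" and S :: "(nat \<times> 'b) set"
  assumes a: "a \<in> {1..w}" and k: "0 < k" "k < w - 1" and y: "y \<in> verts H"
  defines "c \<equiv> cycle_walk w a" and "F \<equiv> filled (hier_prod (cycle_graph w) U H) S"
  assumes prev: "(c (k - 1), y) \<in> F" and cur: "(c k, y) \<in> F"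
    and column: "c k \<in> U \<Longrightarrow> {c k} \<times> (nbrs H y \<inter> verts H) \<subseteq> F"
  shows "(c (k + 1), y) \<in> F"
proof -
  have in_cycle: "c (k - 1) \<in> {1..w}" "c k \<in> {1..w}" "c (k + 1) \<in> {1..w}"
    using cycle_walk_in[OF a] k unfolding c_def by auto
  have nbrs_eq: "nbrs (hier_prod (cycle_graph w) U H) (c k, y) =
      (if c k \<in> U then {c k} \<times> (nbrs H y \<inter> verts H) else {}) \<union> {c (k - 1), c (k + 1)} \<times> {y}"
    using nbrs_hier_prod[of "c k" "cycle_graph w" y H U] nbrs_cycle_walk_interior[OF a k]
      in_cycle y unfolding c_def by simp
  show ?thesis
    unfolding F_def
    by (rule filled_forceI[OF cur[unfolded F_def]]) (use nbrs_eq prev column in \<open>auto simp: F_def\<close>)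
qed

lemma zero_forcing_set_two_columns:
  fixes U :: "nat set" and H :: "'b graph"
  assumes a: "a \<in> {1..w}" and w: "2 \<le> w"
  defines "c \<equiv> cycle_walk w a"
  shows "zero_forcing_set (hier_prod (cycle_graph w) U H) ({c 0, c 1} \<times> verts H)"
proof -
  define F where "F = filled (hier_prod (cycle_graph w) U H) ({c 0, c 1} \<times> verts H)"
  have column: "{c k} \<times> verts H \<subseteq> F" if "k \<le> w - 1" for k
    using that
  proof (rule bounded_induct_two_steps)
    show "{c 0} \<times> verts H \<subseteq> F" and "{c 1} \<times> verts H \<subseteq> F"
      by (auto simp: F_def intro: filled.init)
  next
    fix k assume k: "k + 2 \<le> w - 1"
      and IH: "{c k} \<times> verts H \<subseteq> F" "{c (k + 1)} \<times> verts H \<subseteq> F"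
    show "{c (k + 2)} \<times> verts H \<subseteq> F"
    proof clarify
      fix y assume "y \<in> verts H"
      then show "(c (k + 2), y) \<in> F"
        using filled_cycle_walk_step[OF a, of "k + 1" y H U "{c 0, c 1} \<times> verts H"] k IH
        unfolding c_def F_def by auto
    qed
  qed
  show ?thesis
    unfolding zero_forcing_set_def F_def[symmetric]
  proof
    show "{c 0, c 1} \<times> verts H \<subseteq> verts (hier_prod (cycle_graph w) U H)"
      using cycle_walk_in[OF a] w unfolding c_def by auto
    show "verts (hier_prod (cycle_graph w) U H) \<subseteq> F"
    proof
      fix v assume "v \<in> verts (hier_prod (cycle_graph w) U H)"
      then obtain x y where v: "v = (x, y)" and "x \<in> {1..w}" and y: "y \<in> verts H" by auto
      then obtain k where "k < w" and "x = c k" using cycle_walk_surj[OF a] unfolding c_def by metis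
      then have "{x} \<times> verts H \<subseteq> F" using column[of k] by simp
      then show "v \<in> F" using v y by blast
    qed
  qed
qed

lemma filled_row_from_two_columns:
  fixes U :: "nat set" and H :: "'b graph" and S :: "(nat \<times> 'b) set"
  assumes a: "a \<in> {1..w}" and y: "y \<in> verts H"
  defines "c \<equiv> cycle_walk w a" and "F \<equiv> filled (hier_prod (cycle_graph w) U H) S"
  assumes U: "U \<subseteq> {c 0, c (w - 1)}" and "(c 0, y) \<in> F" and "(c 1, y) \<in> F"
  shows "{1..w} \<times> {y} \<subseteq> F"
proof -
  have walk: "(c k, y) \<in> F" if "k \<le> w - 1" for k
    using that
  proof (rule bounded_induct_two_steps)
    show "(c 0, y) \<in> F" and "(c 1, y) \<in> F" by fact+
  next
    fix k assume k: "k + 2 \<le> w - 1" and IH: "(c k, y) \<in> F" "(c (k + 1), y) \<in> F"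
    have "c (k + 1) \<noteq> c 0" and "c (k + 1) \<noteq> c (w - 1)"
      using cycle_walk_eq_iff[OF a, of "k + 1"] k unfolding c_def by auto
    then have "c (k + 1) \<notin> U" using U by auto
    then show "(c (k + 2), y) \<in> F"
      using filled_cycle_walk_step[OF a, of "k + 1" y H U S] k y IH unfolding c_def F_def by simp
  qed
  show ?thesis
  proof clarify
    fix x assume "x \<in> {1..w}"
    then obtain k where "k < w" and "x = c k" using cycle_walk_surj[OF a] unfolding c_def by metis
    then show "(x, y) \<in> F" using walk[of k] by simp
  qed
qed

lemma filled_next_row_adjacent_roots:
  fixes S :: "(nat \<times> nat) set"
  assumes a: "a \<in> {1..w}" and w: "3 \<le> w" and y: "3 \<le> y" "y \<le> h"
  defines "c \<equiv> cycle_walk w a"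
    and "F \<equiv> filled (hier_prod (cycle_graph w) {a, cycle_walk w a (w - 1)} (cycle_graph h)) S"
  assumes root_column: "{c 0} \<times> {1..h} \<subseteq> F" and rows: "{1..w} \<times> {y - 2, y - 1} \<subseteq> F"
  shows "{1..w} \<times> {y} \<subseteq> F"
proof -
  let ?G = "hier_prod (cycle_graph w) {c 0, c (w - 1)} (cycle_graph h)"
  have F: "F = filled ?G S" unfolding F_def c_def using a by (simp add: cycle_walk_0)
  have in_cycle: "c 0 \<in> {1..w}" "c 1 \<in> {1..w}" "c (w - 1) \<in> {1..w}"
    using cycle_walk_in[OF a] w unfolding c_def by auto
  have row_nbrs: "nbrs (cycle_graph w) x \<times> {y'} \<subseteq> F" if "{1..w} \<times> {y'} \<subseteq> F" for x y'
    using that nbrs_cycle_graph_subset[of w x] by auto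
  have "(c (w - 1), y) \<in> F"
  proof (rule filled_forceI[of "(c (w - 1), y - 1)" ?G S, folded F])
    have "y - 1 \<in> {1..h}" and "nbrs (cycle_graph h) (y - 1) = {y - 2, y}"
      using nbrs_cycle_graph_interior[of "y - 1" h] y by (auto simp: numeral_2_eq_2)
    then have "nbrs ?G (c (w - 1), y - 1) =
        {c (w - 1)} \<times> {y - 2, y} \<union> nbrs (cycle_graph w) (c (w - 1)) \<times> {y - 1}"
      using nbrs_hier_prod_cycle_graphs[OF in_cycle(3), of "y - 1" h "{c 0, c (w - 1)}"] by simp
    moreover have "nbrs (cycle_graph w) (c (w - 1)) \<times> {y - 1} \<subseteq> F"
      using row_nbrs rows by blast
    moreover have "(c (w - 1), y - 2) \<in> F" using rows in_cycle by auto
    ultimately show "(c (w - 1), y) \<in> nbrs ?G (c (w - 1), y - 1)"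
      and "nbrs ?G (c (w - 1), y - 1) - {(c (w - 1), y)} \<subseteq> F"
      by auto
    show "(c (w - 1), y - 1) \<in> F" using rows in_cycle by auto
  qed
  moreover have "(c 1, y) \<in> F"
  proof (rule filled_forceI[of "(c 0, y)" ?G S, folded F])
    have "nbrs ?G (c 0, y) = {c 0} \<times> nbrs (cycle_graph h) y \<union> {c 1, c (w - 1)} \<times> {y}"
      using nbrs_hier_prod_cycle_graphs[of "c 0" w y h "{c 0, c (w - 1)}"] nbrs_cycle_walk_0[OF a w]
        in_cycle y unfolding c_def by simp
    moreover have "{c 0} \<times> nbrs (cycle_graph h) y \<subseteq> F"
      using root_column nbrs_cycle_graph_subset[of h y] by auto
    ultimately show "(c 1, y) \<in> nbrs ?G (c 0, y)" and "nbrs ?G (c 0, y) - {(c 1, y)} \<subseteq> F"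
      using \<open>(c (w - 1), y) \<in> F\<close> by auto
    show "(c 0, y) \<in> F" using root_column y by auto
  qed
  moreover have "(c 0, y) \<in> F" using root_column y by auto
  ultimately show ?thesis
    using filled_row_from_two_columns[OF a, of y "cycle_graph h" "{c 0, c (w - 1)}" S, folded c_def F] y
    by simp
qed

lemma zero_forcing_set_adjacent_roots:
  assumes a: "a \<in> {1..w}" and w: "3 \<le> w" and h: "4 \<le> h"
  shows "zero_forcing_set (hier_prod (cycle_graph w) {a, cycle_walk w a (w - 1)} (cycle_graph h))
           ({a} \<times> ({1..h} - {2, 3}) \<union> {cycle_walk w a 1} \<times> {1, 2})"
    (is "zero_forcing_set ?G ?S")
proof -
  define c where "c = cycle_walk w a"
  define F where "F = filled ?G ?S"
  have c0: "c 0 = a" using a by (simp add: c_def cycle_walk_0)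
  have in_cycle: "c 0 \<in> {1..w}" "c 1 \<in> {1..w}" "c (w - 1) \<in> {1..w}"
    using cycle_walk_in[OF a] w unfolding c_def by auto
  have seed: "{c 0} \<times> ({1..h} - {2, 3}) \<union> {c 1} \<times> {1, 2} \<subseteq> F"
    unfolding F_def c_def using a by (auto simp: cycle_walk_0 intro: filled.init)
  have nbrs_root: "nbrs ?G (c 0, y) = {c 0} \<times> nbrs (cycle_graph h) y \<union> {c 1, c (w - 1)} \<times> {y}"
    if "y \<in> {1..h}" for y
    using nbrs_hier_prod_cycle_graphs[of a w y h] nbrs_cycle_walk_0[OF a w] a that
    unfolding c_def[symmetric] c0 by simp
  have row: "{1..w} \<times> {y} \<subseteq> F" if "y \<in> {1..h}" "(c 0, y) \<in> F" "(c 1, y) \<in> F" for y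
    using filled_row_from_two_columns[OF a, of y "cycle_graph h" "{a, cycle_walk w a (w - 1)}" ?S,
        folded F_def c_def] that
    unfolding c0 by simp
  have row1: "{1..w} \<times> {1} \<subseteq> F"
    by (rule row) (use seed h in auto)
  have "(c 0, 2) \<in> F"
  proof (rule filled_forceI[of "(c 0, 1)" ?G ?S, folded F_def])
    have "nbrs ?G (c 0, 1) = {c 0} \<times> {2, h} \<union> {c 1, c (w - 1)} \<times> {1}"
      using nbrs_root[of 1] nbrs_cycle_graph_1[of h] h by simp
    moreover have "(c 0, h) \<in> F" using seed h by auto
    moreover have "(c 1, 1) \<in> F" and "(c (w - 1), 1) \<in> F" using row1 in_cycle by auto
    ultimately show "(c 0, 2) \<in> nbrs ?G (c 0, 1)" and "nbrs ?G (c 0, 1) - {(c 0, 2)} \<subseteq> F"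
      by auto
    show "(c 0, 1) \<in> F" using row1 in_cycle by auto
  qed
  then have row2: "{1..w} \<times> {2} \<subseteq> F"
    by (intro row) (use seed h in auto)
  have "(c 0, 3) \<in> F"
  proof (rule filled_forceI[of "(c 0, 2)" ?G ?S, folded F_def])
    have "nbrs ?G (c 0, 2) = {c 0} \<times> {1, 3} \<union> {c 1, c (w - 1)} \<times> {2}"
      using nbrs_root[of 2] nbrs_cycle_graph_interior[of 2 h] h by simp
    moreover have "(c 0, 1) \<in> F" and "(c 1, 2) \<in> F" and "(c (w - 1), 2) \<in> F"
      using row1 row2 in_cycle by auto
    ultimately show "(c 0, 3) \<in> nbrs ?G (c 0, 2)" and "nbrs ?G (c 0, 2) - {(c 0, 3)} \<subseteq> F"
      by auto
    show "(c 0, 2) \<in> F" by fact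
  qed
  with \<open>(c 0, 2) \<in> F\<close> have root_column: "{c 0} \<times> {1..h} \<subseteq> F"
    using seed by auto
  have rows: "{1..w} \<times> {k + 1} \<subseteq> F" if "k \<le> h - 1" for k
    using that
  proof (rule bounded_induct_two_steps)
    show "{1..w} \<times> {0 + 1} \<subseteq> F" and "{1..w} \<times> {1 + 1} \<subseteq> F"
      using row1 row2 by (simp_all add: numeral_2_eq_2)
  next
    fix k assume k: "k + 2 \<le> h - 1"
      and IH: "{1..w} \<times> {k + 1} \<subseteq> F" "{1..w} \<times> {k + 1 + 1} \<subseteq> F"
    have "{1..w} \<times> {k + 3 - 2, k + 3 - 1} \<subseteq> F" using IH by auto
    then have "{1..w} \<times> {k + 3} \<subseteq> F"
      using filled_next_row_adjacent_roots[OF a w, of "k + 3" h ?S, folded c_def F_def] root_column k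
      by simp
    then show "{1..w} \<times> {k + 2 + 1} \<subseteq> F" by (simp add: numeral_3_eq_3)
  qed
  show ?thesis
    unfolding zero_forcing_set_def F_def[symmetric]
  proof
    show "?S \<subseteq> verts ?G" using in_cycle c0 h by (auto simp: c_def)
    show "verts ?G \<subseteq> F"
      unfolding verts_hier_prod verts_cycle_graph
    proof clarify
      fix x y assume x: "x \<in> {1..w}" and y: "y \<in> {1..h}"
      then have "y - 1 \<le> h - 1" and "y = y - 1 + 1" by auto
      then have "{1..w} \<times> {y} \<subseteq> F" using rows by metis
      then show "(x, y) \<in> F" using x by auto
    qed
  qed
qed

lemma zero_forcing_number_hier_prod_cycle_graph_le:
  assumes "2 \<le> w" and "finite (verts H)"
  shows "zero_forcing_number (hier_prod (cycle_graph w) U H) \<le> 2 * card (verts H)"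
proof -
  let ?S = "{cycle_walk w 1 0, cycle_walk w 1 1} \<times> verts H"
  have "zero_forcing_number (hier_prod (cycle_graph w) U H) \<le> card ?S"
    using zero_forcing_set_two_columns[of 1 w U H] assms by (intro zero_forcing_number_le_card) auto
  also have "card ?S \<le> 2 * card (verts H)"
    by (simp add: card_cartesian_product card_insert_if)
  finally show ?thesis .
qed

lemma zero_forcing_number_adjacent_roots_le:
  assumes "a \<in> {1..w}" and "3 \<le> w" and "4 \<le> h"
  shows "zero_forcing_number (hier_prod (cycle_graph w) {a, cycle_walk w a (w - 1)} (cycle_graph h)) \<le> h"
proof -
  let ?S = "{a} \<times> ({1..h} - {2, 3}) \<union> {cycle_walk w a 1} \<times> {1, 2}"
  have "zero_forcing_number (hier_prod (cycle_graph w) {a, cycle_walk w a (w - 1)} (cycle_graph h))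
      \<le> card ?S"
    using zero_forcing_set_adjacent_roots[OF assms] by (intro zero_forcing_number_le_card) auto
  also have "\<dots> \<le> card ({a} \<times> ({1..h} - {2, 3})) + card ({cycle_walk w a 1} \<times> {1, 2 :: nat})"
    by (rule card_Un_le)
  also have "\<dots> = h"
    using assms(3) by (simp add: card_cartesian_product card_Diff_subset)
  finally show ?thesis .
qed

theorem mainTheorem5:
  fixes h w i j :: nat
  assumes "h \<ge> 4" and "w \<ge> 4"
    and "i \<in> {1..w}" and "j \<in> {1..w}" and "i \<noteq> j"
  shows "(adj (cycle_graph w) i j \<longrightarrow>
            zero_forcing_number (hier_prod (cycle_graph w) {i, j} (cycle_graph h)) \<le> h)
       \<and> (\<not> adj (cycle_graph w) i j \<longrightarrow>
            zero_forcing_number (hier_prod (cycle_graph w) {i, j} (cycle_graph h)) \<le> 2 * h)"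
proof (intro conjI impI)
  assume "adj (cycle_graph w) i j"
  then obtain a where "a \<in> {1..w}" and "{i, j} = {a, cycle_walk w a (w - 1)}"
    by (rule adj_cycle_graph_obtain_walk)
  then show "zero_forcing_number (hier_prod (cycle_graph w) {i, j} (cycle_graph h)) \<le> h"
    using zero_forcing_number_adjacent_roots_le assms(1,2) by simp
next
  show "zero_forcing_number (hier_prod (cycle_graph w) {i, j} (cycle_graph h)) \<le> 2 * h"
    using zero_forcing_number_hier_prod_cycle_graph_le[of w "cycle_graph h" "{i, j}"] assms(2) by simp
qed

end
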